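(* Let $X,Y$ be metric spaces and let $X\times Y$ carry a metric for which both projections $\mathrm{pr}_1:X\times Y\to X$ and $\mathrm{pr}_2:X\times Y\to Y$ are 1-Lipschitz. For any two Borel probability measures $\pi,\pi'$ on $X\times Y$, \[ |d_{\mathrm{conc}}^{\pi}(X,Y)-d_{\mathrm{conc}}^{\pi'}(X,Y)|\le 2\,d_{\mathrm P}(\pi,\pi'). \]
   Context: $\mathcal{L}ip_1(X)$ is the set of 1-Lipschitz functions $X\to\mathbb R$, and $\mathrm{pr}_1^*\mathcal{L}ip_1(X):=\{f\circ\mathrm{pr}_1:f\in\mathcal{L}ip_1(X)\}$ (similarly for $Y$). For a Borel probability measure $\pi$ on $X\times Y$ and measurable $F,G:X\times Y\to\mathbb R$, $d_{\mathrm{KF}}^\pi(F,G):=\inf\{\varepsilon\ge0:\pi(\{|F-G|>\varepsilon\})\le\varepsilon\}$, and $d_{\mathrm{conc}}^{\pi}(X,Y):=d_{\mathrm H}^{d_{\mathrm{KF}}^\pi}(\mathrm{pr}_1^*\mathcal{L}ip_1(X),\mathrm{pr}_2^*\mathcal{L}ip_1(Y))$, the Hausdorff distance with respect to $d_{\mathrm{KF}}^\pi$. $d_{\mathrm P}$ is the Prohorov metric on Borel probability measures on $X\times Y$. *)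

theory Defs
  imports "HOL-Analysis.Analysis" "HOL-Probability.Probability"
begin

definition mborel :: "'a set \<Rightarrow> ('a \<Rightarrow> 'a \<Rightarrow> real) \<Rightarrow> 'a set set" where
  "mborel M d = sigma_sets M {U. openin (Metric_space.mtopology M d) U}"

definition borel_prob_measure :: "'a set \<Rightarrow> ('a \<Rightarrow> 'a \<Rightarrow> real) \<Rightarrow> 'a measure \<Rightarrow> bool" where
  "borel_prob_measure M d \<pi> \<longleftrightarrow> prob_space \<pi> \<and> space \<pi> = M \<and> sets \<pi> = mborel M d"

definition Lip1 :: "'a set \<Rightarrow> ('a \<Rightarrow> 'a \<Rightarrow> real) \<Rightarrow> ('a \<Rightarrow> real) set" where
  "Lip1 M d = {f. \<forall>x\<in>M. \<forall>y\<in>M. \<bar>f x - f y\<bar> \<le> d x y}"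

definition dKF :: "'a measure \<Rightarrow> ('a \<Rightarrow> real) \<Rightarrow> ('a \<Rightarrow> real) \<Rightarrow> real" where
  "dKF \<pi> F G = Inf {\<epsilon>. \<epsilon> \<ge> 0 \<and> measure \<pi> {z \<in> space \<pi>. \<bar>F z - G z\<bar> > \<epsilon>} \<le> \<epsilon>}"

definition hausdorff_dist :: "('b \<Rightarrow> 'b \<Rightarrow> real) \<Rightarrow> 'b set \<Rightarrow> 'b set \<Rightarrow> real" where
  "hausdorff_dist dd A B =
     max (SUP a\<in>A. INF b\<in>B. dd a b) (SUP b\<in>B. INF a\<in>A. dd a b)"

definition dconc :: "('a \<times> 'b) measure \<Rightarrow> 'a set \<Rightarrow> ('a \<Rightarrow> 'a \<Rightarrow> real)
    \<Rightarrow> 'b set \<Rightarrow> ('b \<Rightarrow> 'b \<Rightarrow> real) \<Rightarrow> real" where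
  "dconc \<pi> X dX Y dY = hausdorff_dist (dKF \<pi>)
      ((\<lambda>f. f \<circ> fst) ` Lip1 X dX) ((\<lambda>g. g \<circ> snd) ` Lip1 Y dY)"

definition open_nbhd :: "'a set \<Rightarrow> ('a \<Rightarrow> 'a \<Rightarrow> real) \<Rightarrow> real \<Rightarrow> 'a set \<Rightarrow> 'a set" where
  "open_nbhd M d \<epsilon> A = {z \<in> M. \<exists>a\<in>A. d z a < \<epsilon>}"

definition prohorov :: "'a set \<Rightarrow> ('a \<Rightarrow> 'a \<Rightarrow> real) \<Rightarrow> 'a measure \<Rightarrow> 'a measure \<Rightarrow> real" where
  "prohorov M d \<mu> \<nu> = Inf {\<epsilon>. \<epsilon> > 0 \<and> (\<forall>A \<in> mborel M d.
       measure \<mu> A \<le> measure \<nu> (open_nbhd M d \<epsilon> A) + \<epsilon> \<and>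
       measure \<nu> A \<le> measure \<mu> (open_nbhd M d \<epsilon> A) + \<epsilon>)}"

end

theory Submission
  imports Defs
begin

text \<open>For \<open>F = f \<circ> fst\<close> and \<open>G = g \<circ> snd\<close> with \<open>f, g\<close> 1-Lipschitz, \<open>F - G\<close> is
  2-Lipschitz on \<open>X \<times> Y\<close>. Write \<open>U\<^sub>\<delta>\<close> for the open \<open>\<delta>\<close>-neighbourhood. If every Borel set
  \<open>A\<close> satisfies \<open>\<pi>' A \<le> \<pi> (U\<^sub>\<delta> A) + \<delta>\<close>, then \<open>U\<^sub>\<delta> {\<bar>F - G\<bar> > e + 2\<delta>}\<close> lies inside
  \<open>{\<bar>F - G\<bar> > e}\<close>, so any Ky Fan bound \<open>e\<close> for \<open>\<pi>\<close> yields the bound \<open>e + 2\<delta>\<close> for \<open>\<pi>'\<close>.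
  Hence each Ky Fan distance between \<open>F\<close> and \<open>G\<close> moves by at most \<open>2 d\<^sub>P(\<pi>, \<pi>')\<close>, and a
  uniform perturbation of a distance moves the Hausdorff distance by at most as much.\<close>

lemma Lip1_const: "Metric_space M d \<Longrightarrow> (\<lambda>_. c) \<in> Lip1 M d"
  unfolding Lip1_def by (simp add: Metric_space.nonneg)

lemma abs_gt_in_mborel:
  fixes H :: "'a \<Rightarrow> real"
  assumes "Metric_space M d" and "L > 0"
    and lip: "\<forall>z\<in>M. \<forall>a\<in>M. \<bar>H z - H a\<bar> \<le> L * d z a"
  shows "{z \<in> M. c < \<bar>H z\<bar>} \<in> mborel M d"
proof -
  interpret Metric_space M d by fact
  have "openin mtopology {z \<in> M. c < \<bar>H z\<bar>}"
    unfolding openin_mtopology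
  proof (intro conjI allI impI)
    fix x assume x: "x \<in> {z \<in> M. c < \<bar>H z\<bar>}"
    show "\<exists>r>0. mball x r \<subseteq> {z \<in> M. c < \<bar>H z\<bar>}"
    proof (intro exI[of _ "(\<bar>H x\<bar> - c) / L"] conjI subsetI)
      show "(\<bar>H x\<bar> - c) / L > 0" using x \<open>L > 0\<close> by auto
      fix y assume "y \<in> mball x ((\<bar>H x\<bar> - c) / L)"
      hence "y \<in> M" and "L * d x y < \<bar>H x\<bar> - c"
        using \<open>L > 0\<close> by (auto simp: field_simps)
      moreover have "\<bar>H x - H y\<bar> \<le> L * d x y" using lip x \<open>y \<in> M\<close> by blast
      ultimately show "y \<in> {z \<in> M. c < \<bar>H z\<bar>}" by auto
    qed
  qed auto
  thus ?thesis unfolding mborel_def by auto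
qed

lemma measure_abs_gt_prohorov_shift:
  fixes H :: "'a \<Rightarrow> real"
  assumes "Metric_space M d" and "L > 0"
    and lip: "\<forall>z\<in>M. \<forall>a\<in>M. \<bar>H z - H a\<bar> \<le> L * d z a"
    and "prob_space \<mu>" and sets_\<mu>: "sets \<mu> = mborel M d"
    and e: "measure \<mu> {z \<in> M. e < \<bar>H z\<bar>} \<le> e"
    and nbhd: "\<forall>A\<in>mborel M d. measure \<nu> A \<le> measure \<mu> (open_nbhd M d \<delta> A) + \<delta>"
  shows "measure \<nu> {z \<in> M. e + L * \<delta> < \<bar>H z\<bar>} \<le> e + \<delta>"
proof -
  interpret prob_space \<mu> by fact
  let ?A = "{z \<in> M. e + L * \<delta> < \<bar>H z\<bar>}"
  have "open_nbhd M d \<delta> ?A \<subseteq> {z \<in> M. e < \<bar>H z\<bar>}"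
  proof
    fix z assume "z \<in> open_nbhd M d \<delta> ?A"
    then obtain a where a: "z \<in> M" "a \<in> M" "e + L * \<delta> < \<bar>H a\<bar>" "d z a < \<delta>"
      unfolding open_nbhd_def by auto
    have "\<bar>H z - H a\<bar> \<le> L * d z a" using lip a by blast
    moreover have "L * d z a \<le> L * \<delta>" using a \<open>L > 0\<close> by simp
    ultimately show "z \<in> {z \<in> M. e < \<bar>H z\<bar>}" using a by auto
  qed
  hence "measure \<mu> (open_nbhd M d \<delta> ?A) \<le> measure \<mu> {z \<in> M. e < \<bar>H z\<bar>}"
    by (rule finite_measure_mono) (simp add: sets_\<mu> abs_gt_in_mborel[OF assms(1-3)])
  moreover have "measure \<nu> ?A \<le> measure \<mu> (open_nbhd M d \<delta> ?A) + \<delta>"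
    using nbhd abs_gt_in_mborel[OF assms(1-3)] by blast
  ultimately show ?thesis using e by linarith
qed

lemma dKF_le:
  assumes "0 \<le> e" and "measure \<pi> {z \<in> space \<pi>. e < \<bar>F z - G z\<bar>} \<le> e"
  shows "dKF \<pi> F G \<le> e"
  unfolding dKF_def using assms by (intro cInf_lower) (auto intro: bdd_belowI[of _ 0])

lemma dKF_le_1: "prob_space \<pi> \<Longrightarrow> dKF \<pi> F G \<le> 1"
  by (rule dKF_le) (auto intro: prob_space.prob_le_1)

lemma dKF_nonneg: "prob_space \<pi> \<Longrightarrow> 0 \<le> dKF \<pi> F G"
  unfolding dKF_def
  by (rule cInf_greatest) (auto intro!: exI[of _ 1] prob_space.prob_le_1)

lemma le_cInf_add_mult_cInf:
  fixes S P :: "real set"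
  assumes "S \<noteq> {}" and "P \<noteq> {}" and "L > 0"
    and le: "\<And>e \<delta>. e \<in> S \<Longrightarrow> \<delta> \<in> P \<Longrightarrow> x \<le> e + L * \<delta>"
  shows "x \<le> Inf S + L * Inf P"
proof -
  have "x - L * \<delta> \<le> Inf S" if "\<delta> \<in> P" for \<delta>
    using le that by (intro cInf_greatest[OF \<open>S \<noteq> {}\<close>]) force
  hence "(x - Inf S) / L \<le> Inf P"
    using \<open>L > 0\<close> by (intro cInf_greatest[OF \<open>P \<noteq> {}\<close>]) (auto simp: field_simps)
  thus ?thesis using \<open>L > 0\<close> by (simp add: field_simps)
qed

lemma dKF_prohorov_shift:
  fixes F G :: "'a \<Rightarrow> real"
  assumes "Metric_space M d" and "L \<ge> 1"
    and lip: "\<forall>z\<in>M. \<forall>a\<in>M. \<bar>(F z - G z) - (F a - G a)\<bar> \<le> L * d z a"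
    and \<mu>: "borel_prob_measure M d \<mu>" and \<nu>: "borel_prob_measure M d \<nu>"
  shows "dKF \<nu> F G \<le> dKF \<mu> F G + L * prohorov M d \<mu> \<nu>"
proof -
  have "prob_space \<mu>" "sets \<mu> = mborel M d" "space \<mu> = M"
    and "prob_space \<nu>" "space \<nu> = M"
    using \<mu> \<nu> unfolding borel_prob_measure_def by auto
  define S where "S = {e. 0 \<le> e \<and> measure \<mu> {z \<in> M. e < \<bar>F z - G z\<bar>} \<le> e}"
  define P where "P = {\<delta>. \<delta> > 0 \<and> (\<forall>A \<in> mborel M d.
       measure \<mu> A \<le> measure \<nu> (open_nbhd M d \<delta> A) + \<delta> \<and>
       measure \<nu> A \<le> measure \<mu> (open_nbhd M d \<delta> A) + \<delta>)}"
  have "dKF \<nu> F G \<le> Inf S + L * Inf P"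
  proof (rule le_cInf_add_mult_cInf)
    show "S \<noteq> {}"
      using \<open>prob_space \<mu>\<close> unfolding S_def by (auto intro!: exI[of _ 1] prob_space.prob_le_1)
    show "P \<noteq> {}"
      using \<open>prob_space \<mu>\<close> \<open>prob_space \<nu>\<close> unfolding P_def
      by (auto intro!: exI[of _ 1] add_increasing prob_space.prob_le_1)
    fix e \<delta> assume "e \<in> S" "\<delta> \<in> P"
    hence "measure \<nu> {z \<in> M. e + L * \<delta> < \<bar>F z - G z\<bar>} \<le> e + \<delta>"
      unfolding S_def P_def
      by (intro measure_abs_gt_prohorov_shift[where H = "\<lambda>z. F z - G z"])
         (use assms \<open>prob_space \<mu>\<close> \<open>sets \<mu> = mborel M d\<close> in auto)
    also have "\<dots> \<le> e + L * \<delta>" using \<open>L \<ge> 1\<close> \<open>\<delta> \<in> P\<close> unfolding P_def by simp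
    finally show "dKF \<nu> F G \<le> e + L * \<delta>"
      using \<open>e \<in> S\<close> \<open>\<delta> \<in> P\<close> \<open>space \<nu> = M\<close> \<open>L \<ge> 1\<close> unfolding S_def P_def
      by (intro dKF_le) auto
  qed (use \<open>L \<ge> 1\<close> in auto)
  thus ?thesis unfolding dKF_def prohorov_def S_def P_def \<open>space \<mu> = M\<close> .
qed

lemma cINF_le_cINF_add:
  fixes f g :: "'a \<Rightarrow> real"
  assumes "B \<noteq> {}" and "bdd_below (g ` B)" and "\<forall>b\<in>B. g b \<le> f b + c"
  shows "(INF b\<in>B. g b) \<le> (INF b\<in>B. f b) + c"
proof -
  have "(INF b\<in>B. g b) - c \<le> (INF b\<in>B. f b)"
  proof (rule cINF_greatest[OF \<open>B \<noteq> {}\<close>])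
    fix b assume "b \<in> B"
    have "(INF b\<in>B. g b) \<le> g b" using \<open>bdd_below (g ` B)\<close> \<open>b \<in> B\<close> by (rule cINF_lower)
    thus "(INF b\<in>B. g b) - c \<le> f b" using assms(3) \<open>b \<in> B\<close> by force
  qed
  thus ?thesis by simp
qed

lemma cSUP_le_cSUP_add:
  fixes f g :: "'a \<Rightarrow> real"
  assumes "A \<noteq> {}" and "bdd_above (f ` A)" and "\<forall>a\<in>A. g a \<le> f a + c"
  shows "(SUP a\<in>A. g a) \<le> (SUP a\<in>A. f a) + c"
proof (rule cSUP_least[OF \<open>A \<noteq> {}\<close>])
  fix a assume "a \<in> A"
  hence "f a \<le> (SUP a\<in>A. f a)" using \<open>bdd_above (f ` A)\<close> by (rule cSUP_upper)
  thus "g a \<le> (SUP a\<in>A. f a) + c" using assms(3) \<open>a \<in> A\<close> by force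
qed

lemma hausdorff_dist_le_add:
  fixes dd dd' :: "'b \<Rightarrow> 'b \<Rightarrow> real"
  assumes "A \<noteq> {}" and "B \<noteq> {}"
    and bounds: "\<forall>a\<in>A. \<forall>b\<in>B. 0 \<le> dd a b \<and> dd a b \<le> K \<and> 0 \<le> dd' a b"
    and le: "\<forall>a\<in>A. \<forall>b\<in>B. dd' a b \<le> dd a b + c"
  shows "hausdorff_dist dd' A B \<le> hausdorff_dist dd A B + c"
proof -
  obtain a\<^sub>0 b\<^sub>0 where "a\<^sub>0 \<in> A" "b\<^sub>0 \<in> B" using assms(1,2) by blast
  have bdd_below_dd: "bdd_below ((\<lambda>b. dd a b) ` B)" "bdd_below ((\<lambda>a. dd a b) ` A)"
    and bdd_below_dd': "bdd_below ((\<lambda>b. dd' a b) ` B)" "bdd_below ((\<lambda>a. dd' a b) ` A)"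
    if "a \<in> A" "b \<in> B" for a b
    using bounds that by (auto intro!: bdd_belowI2[of _ 0])
  have "(INF b\<in>B. dd a b) \<le> K" if "a \<in> A" for a
    using bdd_below_dd(1)[OF that \<open>b\<^sub>0 \<in> B\<close>] \<open>b\<^sub>0 \<in> B\<close> bounds that
    by (intro cINF_lower2[of _ _ b\<^sub>0]) auto
  hence "(SUP a\<in>A. INF b\<in>B. dd' a b) \<le> (SUP a\<in>A. INF b\<in>B. dd a b) + c"
    using \<open>A \<noteq> {}\<close> \<open>B \<noteq> {}\<close> bdd_below_dd'(1)[OF _ \<open>b\<^sub>0 \<in> B\<close>] le
    by (intro cSUP_le_cSUP_add cINF_le_cINF_add ballI bdd_aboveI2) auto
  moreover have "(INF a\<in>A. dd a b) \<le> K" if "b \<in> B" for b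
    using bdd_below_dd(2)[OF \<open>a\<^sub>0 \<in> A\<close> that] \<open>a\<^sub>0 \<in> A\<close> bounds that
    by (intro cINF_lower2[of _ _ a\<^sub>0]) auto
  hence "(SUP b\<in>B. INF a\<in>A. dd' a b) \<le> (SUP b\<in>B. INF a\<in>A. dd a b) + c"
    using \<open>A \<noteq> {}\<close> \<open>B \<noteq> {}\<close> bdd_below_dd'(2)[OF \<open>a\<^sub>0 \<in> A\<close>] le
    by (intro cSUP_le_cSUP_add cINF_le_cINF_add ballI bdd_aboveI2) auto
  ultimately show ?thesis unfolding hausdorff_dist_def by linarith
qed

lemma prohorov_commute: "prohorov M d \<mu> \<nu> = prohorov M d \<nu> \<mu>"
  unfolding prohorov_def by (metis (no_types, lifting))

lemma Lip1_fst_diff_snd: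
  assumes "f \<in> Lip1 X dX" and "g \<in> Lip1 Y dY"
    and "\<forall>p\<in>X \<times> Y. \<forall>q\<in>X \<times> Y. dX (fst p) (fst q) \<le> dXY p q"
    and "\<forall>p\<in>X \<times> Y. \<forall>q\<in>X \<times> Y. dY (snd p) (snd q) \<le> dXY p q"
    and "z \<in> X \<times> Y" and "a \<in> X \<times> Y"
  shows "\<bar>(f (fst z) - g (snd z)) - (f (fst a) - g (snd a))\<bar> \<le> 2 * dXY z a"
proof -
  have "\<bar>f (fst z) - f (fst a)\<bar> \<le> dX (fst z) (fst a)"
    and "\<bar>g (snd z) - g (snd a)\<bar> \<le> dY (snd z) (snd a)"
    using assms(1,2,5,6) unfolding Lip1_def by auto
  moreover have "dX (fst z) (fst a) \<le> dXY z a" and "dY (snd z) (snd a) \<le> dXY z a"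
    using assms(3-6) by auto
  ultimately show ?thesis by linarith
qed

lemma dconc_prohorov_shift:
  fixes X :: "'a set" and Y :: "'b set"
  assumes "Metric_space X dX" and "Metric_space Y dY" and "Metric_space (X \<times> Y) dXY"
    and "\<forall>p\<in>X \<times> Y. \<forall>q\<in>X \<times> Y. dX (fst p) (fst q) \<le> dXY p q"
    and "\<forall>p\<in>X \<times> Y. \<forall>q\<in>X \<times> Y. dY (snd p) (snd q) \<le> dXY p q"
    and \<mu>: "borel_prob_measure (X \<times> Y) dXY \<mu>" and \<nu>: "borel_prob_measure (X \<times> Y) dXY \<nu>"
  shows "dconc \<nu> X dX Y dY \<le> dconc \<mu> X dX Y dY + 2 * prohorov (X \<times> Y) dXY \<mu> \<nu>"
  unfolding dconc_def
proof (rule hausdorff_dist_le_add[where K = 1])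
  have "prob_space \<mu>" "prob_space \<nu>"
    using \<mu> \<nu> unfolding borel_prob_measure_def by auto
  thus "\<forall>F\<in>(\<lambda>f. f \<circ> fst) ` Lip1 X dX. \<forall>G\<in>(\<lambda>g. g \<circ> snd) ` Lip1 Y dY.
          0 \<le> dKF \<mu> F G \<and> dKF \<mu> F G \<le> 1 \<and> 0 \<le> dKF \<nu> F G"
    by (simp add: dKF_nonneg dKF_le_1)
  show "\<forall>F\<in>(\<lambda>f. f \<circ> fst) ` Lip1 X dX. \<forall>G\<in>(\<lambda>g. g \<circ> snd) ` Lip1 Y dY.
          dKF \<nu> F G \<le> dKF \<mu> F G + 2 * prohorov (X \<times> Y) dXY \<mu> \<nu>"
  proof (intro ballI)
    fix F G :: "'a \<times> 'b \<Rightarrow> real"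
    assume "F \<in> (\<lambda>f. f \<circ> fst) ` Lip1 X dX" "G \<in> (\<lambda>g. g \<circ> snd) ` Lip1 Y dY"
    then obtain f g where f: "f \<in> Lip1 X dX" and g: "g \<in> Lip1 Y dY"
      and FG: "F = f \<circ> fst" "G = g \<circ> snd" by blast
    have "\<forall>z\<in>X \<times> Y. \<forall>a\<in>X \<times> Y. \<bar>(F z - G z) - (F a - G a)\<bar> \<le> 2 * dXY z a"
      unfolding FG comp_def using Lip1_fst_diff_snd[OF f g assms(4,5)] by blast
    thus "dKF \<nu> F G \<le> dKF \<mu> F G + 2 * prohorov (X \<times> Y) dXY \<mu> \<nu>"
      using assms(3) \<mu> \<nu> by (intro dKF_prohorov_shift) auto
  qed
qed (use Lip1_const[OF assms(1)] Lip1_const[OF assms(2)] in blast)+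

theorem lemma5p7:
  fixes X :: "'a set" and dX :: "'a \<Rightarrow> 'a \<Rightarrow> real"
    and Y :: "'b set" and dY :: "'b \<Rightarrow> 'b \<Rightarrow> real"
    and dXY :: "('a \<times> 'b) \<Rightarrow> ('a \<times> 'b) \<Rightarrow> real"
    and \<pi> \<pi>' :: "('a \<times> 'b) measure"
  assumes "Metric_space X dX" and "Metric_space Y dY" and "Metric_space (X \<times> Y) dXY"
    and "\<forall>p\<in>X \<times> Y. \<forall>q\<in>X \<times> Y. dX (fst p) (fst q) \<le> dXY p q"
    and "\<forall>p\<in>X \<times> Y. \<forall>q\<in>X \<times> Y. dY (snd p) (snd q) \<le> dXY p q"
    and "borel_prob_measure (X \<times> Y) dXY \<pi>" and "borel_prob_measure (X \<times> Y) dXY \<pi>'"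
  shows "\<bar>dconc \<pi> X dX Y dY - dconc \<pi>' X dX Y dY\<bar> \<le> 2 * prohorov (X \<times> Y) dXY \<pi> \<pi>'"
proof -
  have "dconc \<pi>' X dX Y dY \<le> dconc \<pi> X dX Y dY + 2 * prohorov (X \<times> Y) dXY \<pi> \<pi>'"
    using assms by (rule dconc_prohorov_shift)
  moreover have "dconc \<pi> X dX Y dY \<le> dconc \<pi>' X dX Y dY + 2 * prohorov (X \<times> Y) dXY \<pi>' \<pi>"
    using assms(1-5,7,6) by (rule dconc_prohorov_shift)
  ultimately show ?thesis by (simp add: prohorov_commute abs_le_iff)
qed

end
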